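(* Let $\Gamma_1\vdash t:\tau$ and $\Gamma_2\vdash s:\rho$ with $\Gamma_1$ and $\Gamma_2$ disjoint, and let $x$ be a variable. Then $\pi(t[s/x])\preccurlyeq\pi(t)+\pi(s)$.
   Context: Types: $\rho,\tau::=\Diamond\mid\mathbf{B}\mid\tau\multimap\rho\mid\tau\otimes\rho\mid\tau\times\rho\mid\mathbf{L}(\tau)$. Raw terms: $r,s,t::=x^\tau\mid c\mid\lambda x^\tau.\,t\mid\langle t,s\rangle\mid ts\mid\{t\}$, where each variable $x^\tau$ carries a type (infinitely many variables of each type), application associates to the left, terms are identified up to renaming of bound variables ($\lambda$ is the only binder), and the constants $c$ with their types are $\mathsf{tt},\mathsf{ff}:\mathbf{B}$; $\mathsf{nil}_\tau:\mathbf{L}(\tau)$; $\mathsf{cons}_\tau:\Diamond\multimap\tau\multimap\mathbf{L}(\tau)\multimap\mathbf{L}(\tau)$; $\otimes_{\tau,\rho}:\tau\multimap\rho\multimap\tau\otimes\rho$. A context is a finite set of typed variables; $\Gamma_1,\Gamma_2$ denotes $\Gamma_1\cup\Gamma_2$ and presupposes $\Gamma_1\cap\Gamma_2=\emptyset$; $x^\tau$ also denotes $\{x^\tau\}$. The relation $\Gamma\vdash t:\tau$ is inductively defined by: (Var) $\Gamma,x^\tau\vdash x:\tau$; (Const) $\Gamma\vdash c:\tau$ for a constant $c$ of type $\tau$; ($\multimap^+$) from $\Gamma\cup\{x^\tau\}\vdash t:\rho$ infer $\Gamma\vdash\lambda x^\tau.t:\tau\multimap\rho$; ($\multimap^-$)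 from $\Gamma_1\vdash t:\tau\multimap\rho$ and $\Gamma_2\vdash s:\tau$ infer $\Gamma_1,\Gamma_2\vdash ts:\rho$; ($\times^+$) from $\Gamma\vdash t:\tau$ and $\Gamma\vdash s:\rho$ infer $\Gamma\vdash\langle t,s\rangle:\tau\times\rho$; ($\times^-_1$) from $\Gamma\vdash t:\tau\times\rho$ infer $\Gamma\vdash t\,\mathsf{tt}:\tau$; ($\times^-_0$) from $\Gamma\vdash t:\tau\times\rho$ infer $\Gamma\vdash t\,\mathsf{ff}:\rho$; ($\mathbf{B}^-$) from $\Gamma_1\vdash t:\mathbf{B}$, $\Gamma_2\vdash s:\tau$, $\Gamma_2\vdash r:\tau$ infer $\Gamma_1,\Gamma_2\vdash t\langle s,r\rangle:\tau$; ($\otimes^-$) from $\Gamma_1\vdash t:\tau\otimes\rho$ and $\Gamma_2,x^\tau,y^\rho\vdash s:\sigma$ infer $\Gamma_1,\Gamma_2\vdash t(\lambda x^\tau.\lambda y^\rho.s):\sigma$; ($\mathbf{L}^-$) from $\Gamma\vdash t:\mathbf{L}(\tau)$ and $\emptyset\vdash s:\Diamond\multimap\tau\multimap\rho\multimap\rho$ infer $\Gamma\vdash t\{s\}:\rho\multimap\rho$. A list with $n$ entries ($n\ge0$) is a term $\mathsf{cons}_\tau d_1a_1(\cdots(\mathsf{cons}_\tau d_na_n\,\mathsf{nil}_\tau)\cdots)$ with $d_i$ arbitrary terms of type $\Diamond$ and $a_i$ arbitrary terms of type $\tau$. Length: $\mathrm{len}(c)=\mathrm{len}(x)=1$; $\mathrm{len}(ts)=\mathrm{len}(t)+\mathrm{len}(s)$;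 $\mathrm{len}(\lambda x.s)=\mathrm{len}(s)+1$; $\mathrm{len}(\langle t,s\rangle)=\max(\mathrm{len}(t),\mathrm{len}(s))+1$; $\mathrm{len}(\{t\})=0$. $\mathbb{N}^{\mathrm{poly}}$ is the set of functions $\mathbb{N}\to\mathbb{N}$ pointwise bounded by a polynomial; $X$ is the identity, $X_n(m)=\min(n,m)$, natural numbers are identified with constant functions, $+,\cdot,\sup$ are pointwise sum, product and maximum, and $\preccurlyeq$ is the pointwise order. For every raw term $t$ define $\pi(t)\in\mathbb{N}^{\mathrm{poly}}$ by recursion: $\pi(x)=\pi(c)=0$; $\pi(ts)=\pi(t)+X_n\cdot\pi(h)+X_n\cdot\mathrm{len}(h)$ if $t$ is a list with $n$ entries and $s=\{h\}$, and $\pi(ts)=\pi(t)+\pi(s)$ otherwise; $\pi(\lambda x.t)=\pi(t)$; $\pi(\langle t,s\rangle)=\sup(\pi(t),\pi(s))$; $\pi(\{h\})=X\cdot\pi(h)+X\cdot\mathrm{len}(h)$. *)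

theory Defs
  imports Main
begin

datatype ty = Dia | Bool | Lolli ty ty | Tens ty ty | Prod ty ty | Lst ty

text \<open>A variable x^tau is a name together with its type (infinitely many per type).\<close>
type_synonym var = "nat \<times> ty"

datatype const = Tt | Ff | NilC ty | ConsC ty | TensC ty ty

fun ctype :: "const \<Rightarrow> ty" where
  "ctype Tt = Bool"
| "ctype Ff = Bool"
| "ctype (NilC t) = Lst t"
| "ctype (ConsC t) = Lolli Dia (Lolli t (Lolli (Lst t) (Lst t)))"
| "ctype (TensC t r) = Lolli t (Lolli r (Tens t r))"

datatype trm = V var | C const | Lam var trm | Pair trm trm | App trm trm | Brace trm

fun fv :: "trm \<Rightarrow> var set" where
  "fv (V x) = {x}"
| "fv (C c) = {}"
| "fv (Lam x t) = fv t - {x}"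
| "fv (Pair t s) = fv t \<union> fv s"
| "fv (App t s) = fv t \<union> fv s"
| "fv (Brace t) = fv t"

definition swapv :: "var \<Rightarrow> var \<Rightarrow> var \<Rightarrow> var" where
  "swapv a b v = (if v = a then b else if v = b then a else v)"

fun swap :: "var \<Rightarrow> var \<Rightarrow> trm \<Rightarrow> trm" where
  "swap a b (V x) = V (swapv a b x)"
| "swap a b (C c) = C c"
| "swap a b (Lam x t) = Lam (swapv a b x) (swap a b t)"
| "swap a b (Pair t s) = Pair (swap a b t) (swap a b s)"
| "swap a b (App t s) = App (swap a b t) (swap a b s)"
| "swap a b (Brace t) = Brace (swap a b t)"

lemma size_swap[simp]: "size (swap a b t) = size t"
  by (induction t) auto

definition fresh_name :: "var set \<Rightarrow> ty \<Rightarrow> nat" where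
  "fresh_name S T = (LEAST n. (n, T) \<notin> S)"

text \<open>Capture-avoiding substitution: subst t x s is t[s/x].\<close>
function subst :: "trm \<Rightarrow> var \<Rightarrow> trm \<Rightarrow> trm" where
  "subst (V y) x s = (if y = x then s else V y)"
| "subst (C c) x s = C c"
| "subst (Lam y t) x s =
     (if y = x then Lam y t
      else if y \<notin> fv s then Lam y (subst t x s)
      else (let z = (fresh_name (fv s \<union> fv t \<union> {x, y}) (snd y), snd y)
            in Lam z (subst (swap y z t) x s)))"
| "subst (Pair t u) x s = Pair (subst t x s) (subst u x s)"
| "subst (App t u) x s = App (subst t x s) (subst u x s)"
| "subst (Brace t) x s = Brace (subst t x s)"
  by pat_completeness auto
termination
  by (relation "measure (\<lambda>(t, x, s). size t)") auto

inductive typing :: "var set \<Rightarrow> trm \<Rightarrow> ty \<Rightarrow> bool" where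
  TVar: "finite \<Gamma> \<Longrightarrow> x \<in> \<Gamma> \<Longrightarrow> typing \<Gamma> (V x) (snd x)"
| TConst: "finite \<Gamma> \<Longrightarrow> typing \<Gamma> (C c) (ctype c)"
| TLam: "typing (\<Gamma> \<union> {x}) t \<rho> \<Longrightarrow> typing \<Gamma> (Lam x t) (Lolli (snd x) \<rho>)"
| TApp: "typing \<Gamma>1 t (Lolli \<tau> \<rho>) \<Longrightarrow> typing \<Gamma>2 s \<tau> \<Longrightarrow> \<Gamma>1 \<inter> \<Gamma>2 = {}
          \<Longrightarrow> typing (\<Gamma>1 \<union> \<Gamma>2) (App t s) \<rho>"
| TPair: "typing \<Gamma> t \<tau> \<Longrightarrow> typing \<Gamma> s \<rho> \<Longrightarrow> typing \<Gamma> (Pair t s) (Prod \<tau> \<rho>)"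
| TProj1: "typing \<Gamma> t (Prod \<tau> \<rho>) \<Longrightarrow> typing \<Gamma> (App t (C Tt)) \<tau>"
| TProj0: "typing \<Gamma> t (Prod \<tau> \<rho>) \<Longrightarrow> typing \<Gamma> (App t (C Ff)) \<rho>"
| TBool: "typing \<Gamma>1 t Bool \<Longrightarrow> typing \<Gamma>2 s \<tau> \<Longrightarrow> typing \<Gamma>2 r \<tau> \<Longrightarrow> \<Gamma>1 \<inter> \<Gamma>2 = {}
          \<Longrightarrow> typing (\<Gamma>1 \<union> \<Gamma>2) (App t (Pair s r)) \<tau>"
| TTens: "typing \<Gamma>1 t (Tens \<tau> \<rho>) \<Longrightarrow> typing (\<Gamma>2 \<union> {x, y}) s \<sigma>
          \<Longrightarrow> snd x = \<tau> \<Longrightarrow> snd y = \<rho> \<Longrightarrow> x \<notin> \<Gamma>2 \<Longrightarrow> y \<notin> \<Gamma>2 \<Longrightarrow> x \<noteq> y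
          \<Longrightarrow> \<Gamma>1 \<inter> \<Gamma>2 = {}
          \<Longrightarrow> typing (\<Gamma>1 \<union> \<Gamma>2) (App t (Lam x (Lam y s))) \<sigma>"
| TList: "typing \<Gamma> t (Lst \<tau>) \<Longrightarrow> typing {} s (Lolli Dia (Lolli \<tau> (Lolli \<rho> \<rho>)))
          \<Longrightarrow> typing \<Gamma> (App t (Brace s)) (Lolli \<rho> \<rho>)"

text \<open>lst t = Some (tau, n) iff t is cons_tau d1 a1 (... (cons_tau dn an nil_tau)...).\<close>
fun lst :: "trm \<Rightarrow> (ty \<times> nat) option" where
  "lst (C (NilC \<tau>)) = Some (\<tau>, 0)"
| "lst (App (App (App (C (ConsC \<tau>)) d) a) r) =
     (case lst r of Some (\<tau>', n) \<Rightarrow> (if \<tau>' = \<tau> then Some (\<tau>, Suc n) else None) | None \<Rightarrow> None)"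
| "lst _ = None"

definition is_list :: "trm \<Rightarrow> nat \<Rightarrow> bool" where
  "is_list t n \<longleftrightarrow> (\<exists>\<tau>. lst t = Some (\<tau>, n))"

fun len :: "trm \<Rightarrow> nat" where
  "len (V x) = 1"
| "len (C c) = 1"
| "len (App t s) = len t + len s"
| "len (Lam x s) = len s + 1"
| "len (Pair t s) = max (len t) (len s) + 1"
| "len (Brace t) = 0"

fun pi :: "trm \<Rightarrow> nat \<Rightarrow> nat" where
  "pi (V x) = (\<lambda>m. 0)"
| "pi (C c) = (\<lambda>m. 0)"
| "pi (App t s) =
     (case s of
        Brace h \<Rightarrow> (if \<exists>n. is_list t n
                    then (\<lambda>m. pi t m + min (THE n. is_list t n) m * pi h m
                                   + min (THE n. is_list t n) m * len h)
                    else (\<lambda>m. pi t m + pi s m))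
      | _ \<Rightarrow> (\<lambda>m. pi t m + pi s m))"
| "pi (Lam x t) = pi t"
| "pi (Pair t s) = (\<lambda>m. max (pi t m) (pi s m))"
| "pi (Brace h) = (\<lambda>m. m * pi h m + m * len h)"

end

theory Submission
  imports Defs
begin

text \<open>
  The bound \<open>\<pi>\<close> never looks at variable names, so substituting for a variable that does
  not occur leaves \<open>\<pi>\<close> (and \<open>len\<close>) unchanged. In a typed term, \<open>x\<close> never occurs on both
  sides of an application and never inside a brace, whose body is closed. Hence at every
  application at most one side is affected by the substitution, a list stays a list of the
  same length, and in the only place where \<open>\<pi>\<close> multiplies, the brace, nothing changes;
  so by induction \<open>\<pi>(t[s/x])\<close> exceeds \<open>\<pi>(t)\<close> by at most one copy of \<open>\<pi>(s)\<close>.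
\<close>

fun shape :: "trm \<Rightarrow> trm" where
  "shape (V y) = V (0, Bool)"
| "shape (C c) = C c"
| "shape (Lam y t) = Lam (0, Bool) (shape t)"
| "shape (Pair t u) = Pair (shape t) (shape u)"
| "shape (App t u) = App (shape t) (shape u)"
| "shape (Brace t) = Brace (shape t)"

lemma lst_shape: "lst (shape t) = lst t"
  by (induction t rule: lst.induct) (auto split: option.splits)

lemma is_list_shape: "is_list (shape t) = is_list t"
  by (simp add: fun_eq_iff is_list_def lst_shape)

lemma len_shape: "len (shape t) = len t"
  by (induction t) auto

lemma pi_shape: "pi (shape t) = pi t"
  by (induction t rule: pi.induct) (auto simp: is_list_shape len_shape split: trm.splits)

lemma shape_swap: "shape (swap a b t) = shape t"
  by (induction t) auto

lemma swapv_self: "swapv a a v = v"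
  by (simp add: swapv_def)

lemma swap_self: "swap a a t = t"
  by (induction t) (simp_all add: swapv_self)

lemma mem_fv_swap: "v \<in> fv (swap a b t) \<longleftrightarrow> swapv a b v \<in> fv t"
  by (induction t) (auto simp: swapv_def)

lemma finite_fv: "finite (fv t)"
  by (induction t) auto

lemma fresh_name_notin:
  assumes "finite S"
  shows "(fresh_name S T, T) \<notin> S"
proof -
  have "finite {n. (n, T) \<in> S}"
    using finite_imageI[OF assms, of fst] by (rule finite_subset[rotated]) force
  then have "\<exists>n. (n, T) \<notin> S"
    using ex_new_if_finite[OF infinite_UNIV_nat] by blast
  then show ?thesis
    unfolding fresh_name_def by (rule LeastI_ex)
qed

lemma subst_Lam_rename:
  assumes "y \<noteq> x"
  obtains z where "subst (Lam y t) x s = Lam z (subst (swap y z t) x s)" and "swapv y z x = x"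
proof (cases "y \<in> fv s")
  case False
  then show ?thesis
    using that[of y] assms by (simp add: swap_self swapv_self)
next
  case True
  define z where "z = (fresh_name (fv s \<union> fv t \<union> {x, y}) (snd y), snd y)"
  have "z \<notin> fv s \<union> fv t \<union> {x, y}"
    unfolding z_def by (rule fresh_name_notin) (simp add: finite_fv)
  then show ?thesis
    using that[of z] assms True by (auto simp: Let_def z_def swapv_def)
qed

lemma shape_subst_fresh: "x \<notin> fv t \<Longrightarrow> shape (subst t x s) = shape t"
proof (induction t rule: measure_induct_rule[of size])
  case (less t)
  show ?case
  proof (cases t)
    case (Lam y u)
    show ?thesis
    proof (cases "y = x")
      case False
      then obtain z where z: "subst (Lam y u) x s = Lam z (subst (swap y z u) x s)"
        and "swapv y z x = x"
        by (rule subst_Lam_rename)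
      then have "x \<notin> fv (swap y z u)"
        using less.prems Lam False by (simp add: mem_fv_swap)
      then show ?thesis
        using less.IH[of "swap y z u"] Lam z by (simp add: shape_swap)
    qed (simp add: Lam)
  qed (use less in auto)
qed

lemma pi_subst_fresh: "x \<notin> fv t \<Longrightarrow> pi (subst t x s) = pi t"
  by (metis pi_shape shape_subst_fresh)

lemma len_subst_fresh: "x \<notin> fv t \<Longrightarrow> len (subst t x s) = len t"
  by (metis len_shape shape_subst_fresh)

lemma pi_swap: "pi (swap a b t) = pi t"
  by (metis pi_shape shape_swap)

lemma is_list_subst: "is_list a n \<Longrightarrow> is_list (subst a x s) n"
proof -
  have "lst a = Some p \<Longrightarrow> lst (subst a x s) = Some p" for p
    by (induction a arbitrary: p rule: lst.induct) (auto split: option.splits if_splits)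
  then show "is_list a n \<Longrightarrow> is_list (subst a x s) n"
    by (auto simp: is_list_def)
qed

lemma the_is_list: "is_list a n \<Longrightarrow> (THE n. is_list a n) = n"
  by (rule the_equality) (auto simp: is_list_def)

lemma pi_App_Brace_list:
  "is_list a n \<Longrightarrow> pi (App a (Brace h)) m = pi a m + min n m * pi h m + min n m * len h"
  by (auto simp: the_is_list)

lemma pi_App_eq:
  assumes "\<forall>h n. b = Brace h \<longrightarrow> \<not> is_list a n"
  shows "pi (App a b) m = pi a m + pi b m"
  using assms by (cases b) auto

lemma pi_App_le: "pi (App a b) m \<le> pi a m + pi b m"
proof (cases "\<exists>h n. b = Brace h \<and> is_list a n")
  case True
  then obtain h n where "b = Brace h" and "is_list a n"
    by blast
  moreover have "min n m * pi h m + min n m * len h \<le> m * pi h m + m * len h"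
    by (intro add_mono mult_le_mono1) simp_all
  ultimately show ?thesis
    by (simp add: the_is_list)
next
  case False
  then show ?thesis
    by (subst pi_App_eq) auto
qed

text \<open>
  What the proof needs from typing. Both components of a pair may contain \<open>x\<close>, since
  \<open>\<pi>\<close> takes their maximum.
\<close>
fun linear_in :: "var \<Rightarrow> trm \<Rightarrow> bool" where
  "linear_in x (V y) = True"
| "linear_in x (C c) = True"
| "linear_in x (Lam y t) = (y = x \<or> linear_in x t)"
| "linear_in x (Pair a b) = (linear_in x a \<and> linear_in x b)"
| "linear_in x (App a b) = ((x \<notin> fv a \<or> x \<notin> fv b) \<and> linear_in x a \<and> linear_in x b)"
| "linear_in x (Brace h) = (x \<notin> fv h)"

lemma linear_in_swap: "linear_in (swapv a b x) (swap a b t) = linear_in x t"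
  by (induction t) (auto simp: mem_fv_swap swapv_def)

lemma pi_subst_App_le:
  assumes "linear_in x (App a b)"
    and "pi (subst a x s) m \<le> pi a m + pi s m"
    and "pi (subst b x s) m \<le> pi b m + pi s m"
  shows "pi (subst (App a b) x s) m \<le> pi (App a b) m + pi s m"
proof (cases "\<exists>h n. b = Brace h \<and> is_list a n")
  case True
  then obtain h n where b: "b = Brace h" and n: "is_list a n"
    by blast
  have "x \<notin> fv h"
    using assms(1) b by simp
  then have "pi (subst (App a b) x s) m = pi (subst a x s) m + min n m * pi h m + min n m * len h"
    using pi_App_Brace_list[OF is_list_subst[OF n]] b by (simp add: pi_subst_fresh len_subst_fresh)
  also have "\<dots> \<le> pi (App a b) m + pi s m"
    using assms(2) pi_App_Brace_list[OF n] b by simp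
  finally show ?thesis .
next
  case False
  have "pi (subst (App a b) x s) m \<le> pi (subst a x s) m + pi (subst b x s) m"
    using pi_App_le by simp
  moreover have "pi (App a b) m = pi a m + pi b m"
    using False by (subst pi_App_eq) auto
  moreover have "x \<notin> fv a \<or> x \<notin> fv b"
    using assms(1) by simp
  ultimately show ?thesis
    using assms(2,3) by (auto simp: pi_subst_fresh)
qed

lemma pi_subst_le: "linear_in x t \<Longrightarrow> pi (subst t x s) m \<le> pi t m + pi s m"
proof (induction t rule: measure_induct_rule[of size])
  case (less t)
  show ?case
  proof (cases t)
    case (Lam y u)
    show ?thesis
    proof (cases "y = x")
      case False
      then obtain z where z: "subst (Lam y u) x s = Lam z (subst (swap y z u) x s)"
        and "swapv y z x = x"
        by (rule subst_Lam_rename)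
      then have "linear_in x (swap y z u)"
        using less.prems Lam False linear_in_swap[of y z x u] by simp
      then show ?thesis
        using less.IH[of "swap y z u"] Lam z by (simp add: pi_swap)
    qed (simp add: Lam)
  next
    case (App a b)
    then show ?thesis
      using less pi_subst_App_le[of x a b s m] by simp
  next
    case (Brace h)
    then show ?thesis
      using less.prems by (simp add: pi_subst_fresh len_subst_fresh)
  next
    case (Pair a b)
    then have "pi (subst a x s) m \<le> pi a m + pi s m" "pi (subst b x s) m \<le> pi b m + pi s m"
      using less by simp_all
    then show ?thesis
      using Pair by auto
  qed simp_all
qed

lemma typing_fv: "typing \<Gamma> t \<tau> \<Longrightarrow> fv t \<subseteq> \<Gamma>"
  by (induction rule: typing.induct) auto

lemma typing_linear_in: "typing \<Gamma> t \<tau> \<Longrightarrow> linear_in x t"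
  by (induction rule: typing.induct) (fastforce dest: typing_fv)+

theorem lemma4p7:
  fixes \<Gamma>1 \<Gamma>2 :: "var set" and t s :: trm and \<tau> \<rho> :: ty and x :: var
  assumes "typing \<Gamma>1 t \<tau>" and "typing \<Gamma>2 s \<rho>" and "\<Gamma>1 \<inter> \<Gamma>2 = {}"
  shows "\<forall>m. pi (subst t x s) m \<le> pi t m + pi s m"
  \<comment> \<open>only the typing of \<open>t\<close> is needed\<close>
  using pi_subst_le typing_linear_in[OF assms(1)] by blast

end
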